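(* Let $\mu,\nu,q\in\mathscr{P}_2(\mathbb{R}^d)$ with $\mu\preceq_{\mathrm{c}}\nu$ and $q$ not giving mass to small sets. Then \[ \tilde D^q(\mu,\nu)=\inf_{\substack{\psi\in C_2(\mathbb{R}^d),\\ \psi\text{ convex}}}\Big(\int\psi\,d\nu-\int(\psi^\ast\star q)^\ast\,d\mu\Big). \]
   Context: $\mathscr{P}_2(\mathbb{R}^d)$: Borel probability measures with finite second moment. $\mu\preceq_{\mathrm{c}}\nu$ means $\int f\,d\mu\le\int f\,d\nu$ for all convex $f:\mathbb{R}^d\to\mathbb{R}$. $q$ does not give mass to small sets: $q(A)=0$ for measurable $A$ of Hausdorff dimension $\le d-1$. $\mathrm{MCov}(p,q)\coloneqq\sup_{\tilde\pi\in\mathsf{Cpl}(p,q)}\int\langle y,z\rangle\,d\tilde\pi$. $C_2(\mathbb{R}^d)$: continuous $\psi:\mathbb{R}^d\to\mathbb{R}$ with $\ell+\frac{|y|^2}{2}\le\psi(y)\le a+k|y|^2$ for some $a,k,\ell\in\mathbb{R}$. $\mathscr{P}_2^x(\mathbb{R}^d)$: elements of $\mathscr{P}_2(\mathbb{R}^d)$ with barycenter $x$. $\varphi^\psi(x)\coloneqq\inf_{p\in\mathscr{P}_2^x(\mathbb{R}^d)}\big(\int\psi\,dp-\mathrm{MCov}(p,q)\big)$ and $\tilde D^q(\mu,\nu)\coloneqq\inf_{\psi\in C_2(\mathbb{R}^d)}\big(\int\psi\,d\nu-\int\varphi^\psi\,d\mu\big)$. $\psi^\ast$ is the convex conjugate,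 and $(f\star q)(y)\coloneqq\int f(y+z)\,q(dz)$. *)

theory Defs
  imports "HOL-Probability.Probability"
begin

definition diam_pow :: "'a::euclidean_space set \<Rightarrow> real \<Rightarrow> real" where
  "diam_pow S s = (if S = {} then 0 else if s = 0 then 1 else diameter S powr s)"

definition hausdorff_pre :: "real \<Rightarrow> real \<Rightarrow> 'a::euclidean_space set \<Rightarrow> ennreal" where
  "hausdorff_pre s \<delta> A =
     (INF C \<in> {C :: nat \<Rightarrow> 'a set. A \<subseteq> (\<Union>i. C i) \<and> (\<forall>i. bounded (C i) \<and> diameter (C i) \<le> \<delta>)}.
        (\<Sum>i. ennreal (diam_pow (C i) s)))"

definition hausdorff_measure :: "real \<Rightarrow> 'a::euclidean_space set \<Rightarrow> ennreal" where
  "hausdorff_measure s A = (SUP \<delta> \<in> {0<..}. hausdorff_pre s \<delta> A)"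

definition hausdorff_dim :: "'a::euclidean_space set \<Rightarrow> real" where
  "hausdorff_dim A = Inf {s. 0 \<le> s \<and> hausdorff_measure s A = 0}"

definition no_mass_small_sets :: "'a::euclidean_space measure \<Rightarrow> bool" where
  "no_mass_small_sets q \<longleftrightarrow>
     (\<forall>A \<in> sets q. hausdorff_dim A \<le> real DIM('a) - 1 \<longrightarrow> emeasure q A = 0)"

definition P2 :: "'a::euclidean_space measure set" where
  "P2 = {M. prob_space M \<and> sets M = sets borel \<and> integrable M (\<lambda>x. (norm x)\<^sup>2)}"

definition barycenter :: "'a::euclidean_space measure \<Rightarrow> 'a" where
  "barycenter M = (\<integral>y. y \<partial>M)"

definition P2x :: "'a::euclidean_space \<Rightarrow> 'a measure set" where
  "P2x x = {p \<in> P2. barycenter p = x}"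

text \<open>For measures with finite first moment, the (extended) integral of a
  convex function lies in (-infinity, +infinity]; hence int f dmu <= int f dnu holds iff
  whenever f is nu-integrable it is also mu-integrable with smaller integral.\<close>
definition convex_order :: "'a::euclidean_space measure \<Rightarrow> 'a measure \<Rightarrow> bool" where
  "convex_order \<mu> \<nu> \<longleftrightarrow>
     (\<forall>f :: 'a \<Rightarrow> real. convex_on UNIV f \<longrightarrow> integrable \<nu> f \<longrightarrow>
        (integrable \<mu> f \<and> (\<integral>x. f x \<partial>\<mu>) \<le> (\<integral>x. f x \<partial>\<nu>)))"

definition Cpl :: "'a::euclidean_space measure \<Rightarrow> 'a measure \<Rightarrow> ('a \<times> 'a) measure set" where
  "Cpl p q = {\<pi>. prob_space \<pi> \<and> sets \<pi> = sets (borel \<Otimes>\<^sub>M borel)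
                 \<and> distr \<pi> borel fst = p \<and> distr \<pi> borel snd = q}"

definition MCov :: "'a::euclidean_space measure \<Rightarrow> 'a measure \<Rightarrow> real" where
  "MCov p q = Sup ((\<lambda>\<pi>. \<integral>yz. fst yz \<bullet> snd yz \<partial>\<pi>) ` Cpl p q)"

definition C2 :: "('a::euclidean_space \<Rightarrow> real) set" where
  "C2 = {\<psi>. continuous_on UNIV \<psi> \<and>
           (\<exists>a k l. \<forall>y. l + (norm y)\<^sup>2 / 2 \<le> \<psi> y \<and> \<psi> y \<le> a + k * (norm y)\<^sup>2)}"

definition phi_psi :: "'a::euclidean_space measure \<Rightarrow> ('a \<Rightarrow> real) \<Rightarrow> 'a \<Rightarrow> real" where
  "phi_psi q \<psi> x = Inf ((\<lambda>p. (\<integral>y. \<psi> y \<partial>p) - MCov p q) ` P2x x)"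

definition D_tilde :: "'a::euclidean_space measure \<Rightarrow> 'a measure \<Rightarrow> 'a measure \<Rightarrow> ereal" where
  "D_tilde q \<mu> \<nu> = (INF \<psi> \<in> C2. ereal ((\<integral>y. \<psi> y \<partial>\<nu>) - (\<integral>x. phi_psi q \<psi> x \<partial>\<mu>)))"

text \<open>Convex conjugate (real-valued; in the use below it is always finite).\<close>
definition convex_conj :: "('a::euclidean_space \<Rightarrow> real) \<Rightarrow> 'a \<Rightarrow> real" where
  "convex_conj f x = (SUP y. x \<bullet> y - f y)"

definition conv_meas :: "('a::euclidean_space \<Rightarrow> real) \<Rightarrow> 'a measure \<Rightarrow> 'a \<Rightarrow> real" where
  "conv_meas f q y = (\<integral>z. f (y + z) \<partial>q)"

end

theory Submission
  imports Defs
begin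

(* For \<psi> \<in> C2 the function \<phi>\<^sup>\<psi> equals (\<psi>\<^sup>* \<star> q)\<^sup>*. The inequality \<ge> is the Fenchel-Young
   inequality <y, z> \<le> \<psi> y + \<psi>\<^sup>* (w + z) - <w, y> integrated against a coupling of p and q.
   For \<le>, mixing measures and couplings shows that \<phi>\<^sup>\<psi> is convex; being finite it has a
   subgradient g at x, and pushing q forward along a Borel \<epsilon>-maximiser of z \<mapsto> \<psi>\<^sup>* (g + z)
   yields measures p with <g, bary p> - (\<integral> \<psi> dp - MCov p q) \<ge> (\<psi>\<^sup>* \<star> q) g - \<epsilon>, which forces
   \<phi>\<^sup>\<psi> x \<le> <g, x> - (\<psi>\<^sup>* \<star> q) g.
   Both sides of the theorem thus depend on \<psi> only through \<psi>\<^sup>* and \<integral> \<psi> d\<nu>; replacing \<psi> by its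
   convex biconjugate \<psi>\<^sup>*\<^sup>* \<in> C2, which has the same conjugate and lies below \<psi>, can only lower
   the objective. *)

lemma convex_conj_ge:
  assumes "bdd_above (range (\<lambda>y. w \<bullet> y - f y))"
  shows "w \<bullet> y - f y \<le> convex_conj f w"
  unfolding convex_conj_def using assms by (rule cSUP_upper2) auto

lemma convex_conj_le:
  assumes "\<And>y. w \<bullet> y - f y \<le> c"
  shows "convex_conj f w \<le> c"
  unfolding convex_conj_def using assms by (intro cSUP_least) auto

lemma convex_on_convex_conj:
  assumes bdd: "\<And>w. bdd_above (range (\<lambda>y. w \<bullet> y - f y))"
  shows "convex_on UNIV (convex_conj f)"
proof (rule convex_onI)
  fix t :: real and x y :: 'a assume t: "0 < t" "t < 1"
  show "convex_conj f ((1 - t) *\<^sub>R x + t *\<^sub>R y) \<le> (1 - t) * convex_conj f x + t * convex_conj f y"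
  proof (rule convex_conj_le)
    fix z
    have "((1 - t) *\<^sub>R x + t *\<^sub>R y) \<bullet> z - f z = (1 - t) * (x \<bullet> z - f z) + t * (y \<bullet> z - f z)"
      by (simp add: inner_add_left algebra_simps)
    also have "\<dots> \<le> (1 - t) * convex_conj f x + t * convex_conj f y"
      using t by (intro add_mono mult_left_mono convex_conj_ge bdd) auto
    finally show "((1 - t) *\<^sub>R x + t *\<^sub>R y) \<bullet> z - f z \<le> \<dots>" .
  qed
qed simp

lemma convex_on_subgradient:
  fixes f :: "'a::euclidean_space \<Rightarrow> real"
  assumes "convex_on UNIV f"
  obtains g where "\<And>y. f x + g \<bullet> (y - x) \<le> f y"
proof -
  let ?E = "epigraph UNIV f"
  have E: "convex ?E" by (rule convex_epigraphI[OF assms])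
  have xE: "(x, f x) \<in> ?E" by (simp add: mem_epigraph)
  have "(x, f x) \<notin> rel_interior ?E"
  proof
    assume "(x, f x) \<in> rel_interior ?E"
    moreover have "(x, f x + 1) \<in> affine hull ?E"
      by (intro hull_inc) (simp add: mem_epigraph)
    ultimately obtain m :: real where "m > 1" "(1 - m) *\<^sub>R (x, f x + 1) + m *\<^sub>R (x, f x) \<in> ?E"
      using convex_rel_interior_if[OF E] by blast
    then show False by (simp add: mem_epigraph algebra_simps)
  qed
  then obtain a where a: "a \<noteq> 0" "\<And>z. z \<in> ?E \<Longrightarrow> a \<bullet> (x, f x) \<le> a \<bullet> z"
    using supporting_hyperplane_rel_boundary[OF E xE] by metis
  obtain a1 a2 where a12: "a = (a1, a2)" by (cases a)
  have supp: "a1 \<bullet> x + a2 * f x \<le> a1 \<bullet> y + a2 * t" if "f y \<le> t" for y t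
    using a(2)[of "(y, t)"] that by (simp add: mem_epigraph a12)
  have "a2 \<noteq> 0" \<comment> \<open>the supporting hyperplane is not vertical\<close>
  proof
    assume "a2 = 0"
    then have "a1 \<bullet> a1 \<le> 0" using supp[of "x - a1" "f (x - a1)"] by (simp add: inner_diff_right)
    then have "a1 = 0" by (metis inner_gt_zero_iff not_le)
    then show False using a(1) \<open>a2 = 0\<close> by (simp add: a12 zero_prod_def)
  qed
  moreover have "a2 \<ge> 0" using supp[of x "f x + 1"] by (simp add: distrib_left)
  ultimately have a2: "a2 > 0" by simp
  show thesis
  proof
    fix y
    have "a2 * (f x + (- (1 / a2) *\<^sub>R a1) \<bullet> (y - x)) \<le> a2 * f y"
      using supp[of y "f y"] a2 by (simp add: inner_diff_right algebra_simps)
    then show "f x + (- (1 / a2) *\<^sub>R a1) \<bullet> (y - x) \<le> f y"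
      using a2 by (simp add: mult_le_cancel_left)
  qed
qed

lemma norm_add_squared_le: "(norm (x + y))\<^sup>2 \<le> 2 * (norm x)\<^sup>2 + 2 * (norm y)\<^sup>2"
  for x y :: "'a::real_normed_vector"
proof -
  have "(norm (x + y))\<^sup>2 \<le> (norm x + norm y)\<^sup>2"
    by (simp add: norm_triangle_ineq power_mono)
  also have "\<dots> \<le> 2 * (norm x)\<^sup>2 + 2 * (norm y)\<^sup>2"
    using sum_squares_bound[of "norm x" "norm y"] by (simp add: power2_sum)
  finally show ?thesis .
qed

lemma abs_inner_le_squares: "\<bar>x \<bullet> y\<bar> \<le> (norm x)\<^sup>2 + (norm y)\<^sup>2"
proof -
  have "\<bar>x \<bullet> y\<bar> \<le> norm x * norm y" by (rule Cauchy_Schwarz_ineq2)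
  also have "\<dots> \<le> (norm x)\<^sup>2 + (norm y)\<^sup>2"
    using sum_squares_bound[of "norm x" "norm y"] mult_nonneg_nonneg[OF norm_ge_zero norm_ge_zero, of x y]
    by linarith
  finally show ?thesis .
qed

locale C2_function =
  fixes \<psi> :: "'a::euclidean_space \<Rightarrow> real" and a k l :: real
  assumes continuous: "continuous_on UNIV \<psi>"
    and lower_bound: "\<And>y. l + (norm y)\<^sup>2 / 2 \<le> \<psi> y"
    and upper_bound: "\<And>y. \<psi> y \<le> a + k * (norm y)\<^sup>2"

lemma C2_iff_C2_function: "\<psi> \<in> C2 \<longleftrightarrow> (\<exists>a k l. C2_function \<psi> a k l)"
  unfolding C2_def C2_function_def by blast

context C2_function
begin

lemma borel_measurable [measurable]: "\<psi> \<in> borel_measurable borel"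
  by (rule borel_measurable_continuous_onI[OF continuous])

lemma abs_le: "\<bar>\<psi> y\<bar> \<le> \<bar>a\<bar> + \<bar>l\<bar> + \<bar>k\<bar> * (norm y)\<^sup>2"
proof -
  have "k * (norm y)\<^sup>2 \<le> \<bar>k\<bar> * (norm y)\<^sup>2" "0 \<le> \<bar>k\<bar> * (norm y)\<^sup>2" "0 \<le> (norm y)\<^sup>2"
    by (auto intro: mult_right_mono)
  then show ?thesis using lower_bound[of y] upper_bound[of y] by arith
qed

lemma inner_minus_le: "w \<bullet> y - \<psi> y \<le> (norm w)\<^sup>2 / 2 - l"
proof -
  have "w \<bullet> y \<le> norm w * norm y" by (rule norm_cauchy_schwarz)
  also have "\<dots> \<le> (norm w)\<^sup>2 / 2 + (norm y)\<^sup>2 / 2"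
    using sum_squares_bound[of "norm w" "norm y"] by simp
  finally show ?thesis using lower_bound[of y] by simp
qed

lemma bdd_above_conj: "bdd_above (range (\<lambda>y. w \<bullet> y - \<psi> y))"
  using inner_minus_le by (intro bdd_aboveI2)

lemma fenchel_young: "w \<bullet> y - \<psi> y \<le> convex_conj \<psi> w"
  by (rule convex_conj_ge[OF bdd_above_conj])

lemma conj_le: "convex_conj \<psi> w \<le> (norm w)\<^sup>2 / 2 - l"
  by (rule convex_conj_le[OF inner_minus_le])

lemma convex_on_conj: "convex_on UNIV (convex_conj \<psi>)"
  by (rule convex_on_convex_conj[OF bdd_above_conj])

lemma borel_measurable_conj [measurable]: "convex_conj \<psi> \<in> borel_measurable borel"
  by (intro borel_measurable_continuous_onI convex_on_continuous[OF open_UNIV convex_on_conj])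

lemma abs_conj_le: "\<bar>convex_conj \<psi> w\<bar> \<le> \<bar>\<psi> 0\<bar> + \<bar>l\<bar> + (norm w)\<^sup>2"
proof -
  have "- \<psi> 0 \<le> convex_conj \<psi> w" using fenchel_young[of w 0] by simp
  then show ?thesis using conj_le[of w] zero_le_power2[of "norm w"] by arith
qed

text \<open>A Borel \<open>\<epsilon>\<close>-maximiser for the supremum defining \<open>\<psi>\<^sup>*\<close>: by continuity of \<open>\<psi>\<close> the supremum
  can be approached on a countable dense set \<open>{d n}\<close>, and the first index that works depends
  measurably on \<open>w\<close>.\<close>
lemma obtain_measurable_approx_maximizer:
  assumes "e > 0"
  obtains T where "T \<in> borel_measurable borel" "\<And>w. convex_conj \<psi> w - e < w \<bullet> T w - \<psi> (T w)"
proof -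
  obtain D :: "'a set" where D: "countable D" "\<And>U. open U \<Longrightarrow> U \<noteq> {} \<Longrightarrow> \<exists>y\<in>D. y \<in> U"
    using countable_dense_exists by blast
  define d where "d = from_nat_into D"
  define good where "good n w \<longleftrightarrow> convex_conj \<psi> w - e < w \<bullet> d n - \<psi> (d n)" for n w
  have "\<exists>n. good n w" for w
  proof -
    have "convex_conj \<psi> w - e < convex_conj \<psi> w" using assms by simp
    then obtain y where "convex_conj \<psi> w - e < w \<bullet> y - \<psi> y"
      unfolding convex_conj_def using less_cSUP_iff[OF UNIV_not_empty bdd_above_conj] by auto
    moreover have "open {y. convex_conj \<psi> w - e < w \<bullet> y - \<psi> y}"
      by (intro open_Collect_less continuous_intros continuous)
    ultimately obtain y' where "y' \<in> D" "convex_conj \<psi> w - e < w \<bullet> y' - \<psi> y'"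
      using D(2) by blast
    then show ?thesis
      using from_nat_into_surj[OF D(1)] by (metis d_def good_def)
  qed
  then have "good (LEAST n. good n w) w" for w by (rule LeastI_ex)
  moreover have "(\<lambda>w. d (LEAST n. good n w)) \<in> borel_measurable borel"
    unfolding good_def by measurable
  ultimately show thesis by (intro that) (auto simp: good_def)
qed

lemma approx_maximizer_norm_le:
  assumes "convex_conj \<psi> w - e < w \<bullet> y - \<psi> y"
  shows "(norm y)\<^sup>2 \<le> 4 * (norm w)\<^sup>2 + 4 * (\<psi> 0 + e - l)"
proof -
  have "w \<bullet> y \<le> norm w * norm y" by (rule norm_cauchy_schwarz)
  also have "\<dots> \<le> (norm w)\<^sup>2 + (norm y)\<^sup>2 / 4"
    using sum_squares_bound[of "norm w" "norm y / 2"] by (simp add: power_divide)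
  finally have "(norm y)\<^sup>2 / 4 < (norm w)\<^sup>2 + (\<psi> 0 + e - l)"
    using assms fenchel_young[of w 0] lower_bound[of y] by simp
  then show ?thesis by (simp add: field_simps)
qed

lemma inner_minus_conj_le: "y \<bullet> w - convex_conj \<psi> w \<le> \<psi> y"
  using fenchel_young[of w y] by (simp add: inner_commute)

lemma bdd_above_biconj: "bdd_above (range (\<lambda>w. y \<bullet> w - convex_conj \<psi> w))"
  using inner_minus_conj_le by (intro bdd_aboveI2)

lemma biconj_le: "convex_conj (convex_conj \<psi>) y \<le> \<psi> y"
  using inner_minus_conj_le by (intro convex_conj_le)

lemma convex_on_biconj: "convex_on UNIV (convex_conj (convex_conj \<psi>))"
  by (rule convex_on_convex_conj[OF bdd_above_biconj])

lemma C2_function_biconj: "C2_function (convex_conj (convex_conj \<psi>)) a k l"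
proof
  show "continuous_on UNIV (convex_conj (convex_conj \<psi>))"
    by (rule convex_on_continuous[OF open_UNIV convex_on_biconj])
  fix y
  show "l + (norm y)\<^sup>2 / 2 \<le> convex_conj (convex_conj \<psi>) y"
    using convex_conj_ge[OF bdd_above_biconj, of y y] conj_le[of y] by (simp add: power2_norm_eq_inner)
  show "convex_conj (convex_conj \<psi>) y \<le> a + k * (norm y)\<^sup>2"
    using biconj_le upper_bound order_trans by blast
qed

lemma conj_biconj: "convex_conj (convex_conj (convex_conj \<psi>)) = convex_conj \<psi>"
proof
  fix w
  interpret biconj: C2_function "convex_conj (convex_conj \<psi>)" a k l by (rule C2_function_biconj)
  show "convex_conj (convex_conj (convex_conj \<psi>)) w = convex_conj \<psi> w"
  proof (rule antisym)
    show "convex_conj (convex_conj (convex_conj \<psi>)) w \<le> convex_conj \<psi> w"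
    proof (rule convex_conj_le)
      fix y
      show "w \<bullet> y - convex_conj (convex_conj \<psi>) y \<le> convex_conj \<psi> w"
        using convex_conj_ge[OF bdd_above_biconj, of y w] by (simp add: inner_commute)
    qed
    show "convex_conj \<psi> w \<le> convex_conj (convex_conj (convex_conj \<psi>)) w"
      using biconj_le biconj.fenchel_young
      by (intro convex_conj_le) (meson diff_left_mono order_trans)
  qed
qed

end

lemma P2D:
  assumes "p \<in> P2"
  shows "prob_space p" "sets p = sets borel" "integrable p (\<lambda>x. (norm x)\<^sup>2)"
  using assms by (auto simp: P2_def)

lemma integrable_P2_quadratic:
  fixes f :: "'a::euclidean_space \<Rightarrow> real"
  assumes p: "p \<in> P2" and [measurable]: "f \<in> borel_measurable borel"
    and growth: "\<And>x. \<bar>f x\<bar> \<le> c + d * (norm x)\<^sup>2"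
  shows "integrable p f"
proof (rule Bochner_Integration.integrable_bound)
  have [measurable_cong]: "sets p = sets borel" by (rule P2D(2)[OF p])
  interpret prob_space p by (rule P2D(1)[OF p])
  show "integrable p (\<lambda>x. c + d * (norm x)\<^sup>2)"
    using P2D(3)[OF p] by simp
  show "f \<in> borel_measurable p" by measurable
  show "AE x in p. norm (f x) \<le> norm (c + d * (norm x)\<^sup>2)"
    using growth by (intro AE_I2) (metis abs_ge_self order_trans real_norm_def)
qed

lemma integrable_P2_id:
  assumes p: "p \<in> P2"
  shows "integrable p (\<lambda>x::'a::euclidean_space. x)"
proof (rule Bochner_Integration.integrable_bound)
  have [measurable_cong]: "sets p = sets borel" by (rule P2D(2)[OF p])
  interpret prob_space p by (rule P2D(1)[OF p])
  show "integrable p (\<lambda>x. 1 + (norm x)\<^sup>2)"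
    using P2D(3)[OF p] by simp
  show "(\<lambda>x. x) \<in> borel_measurable p" by measurable
  show "AE x in p. norm x \<le> norm (1 + (norm x)\<^sup>2)"
  proof (intro AE_I2)
    fix x :: 'a
    show "norm x \<le> norm (1 + (norm x)\<^sup>2)"
      using sum_squares_bound[of 1 "norm x"] by simp (use norm_ge_zero[of x] in linarith)
  qed
qed

lemma CplD:
  assumes "\<pi> \<in> Cpl p q"
  shows "prob_space \<pi>" "sets \<pi> = sets (borel \<Otimes>\<^sub>M borel)" "distr \<pi> borel fst = p" "distr \<pi> borel snd = q"
  using assms unfolding Cpl_def by simp_all

lemma
  fixes f :: "'a::euclidean_space \<Rightarrow> 'b::{banach, second_countable_topology}"
  assumes \<pi>: "\<pi> \<in> Cpl p q" and f: "f \<in> borel_measurable borel"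
  shows integrable_Cpl_fst: "integrable p f \<longleftrightarrow> integrable \<pi> (\<lambda>x. f (fst x))"
    and integral_Cpl_fst: "integral\<^sup>L p f = (\<integral>x. f (fst x) \<partial>\<pi>)"
    and integrable_Cpl_snd: "integrable q f \<longleftrightarrow> integrable \<pi> (\<lambda>x. f (snd x))"
    and integral_Cpl_snd: "integral\<^sup>L q f = (\<integral>x. f (snd x) \<partial>\<pi>)"
proof -
  have [measurable_cong]: "sets \<pi> = sets (borel \<Otimes>\<^sub>M borel)" by (rule CplD(2)[OF \<pi>])
  have fst: "fst \<in> measurable \<pi> borel" and snd: "snd \<in> measurable \<pi> borel"
    by simp_all
  show "integrable p f \<longleftrightarrow> integrable \<pi> (\<lambda>x. f (fst x))"
       "integral\<^sup>L p f = (\<integral>x. f (fst x) \<partial>\<pi>)"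
       "integrable q f \<longleftrightarrow> integrable \<pi> (\<lambda>x. f (snd x))"
       "integral\<^sup>L q f = (\<integral>x. f (snd x) \<partial>\<pi>)"
    using integrable_distr_eq[OF fst f] integral_distr[OF fst f]
      integrable_distr_eq[OF snd f] integral_distr[OF snd f] CplD(3,4)[OF \<pi>] by auto
qed

lemma integrable_Cpl_inner:
  fixes p q :: "'a::euclidean_space measure"
  assumes \<pi>: "\<pi> \<in> Cpl p q" and p: "p \<in> P2" and q: "q \<in> P2"
  shows "integrable \<pi> (\<lambda>yz. fst yz \<bullet> snd yz)"
proof (rule Bochner_Integration.integrable_bound)
  have [measurable_cong]: "sets \<pi> = sets (borel \<Otimes>\<^sub>M borel)" by (rule CplD(2)[OF \<pi>])
  have sq: "(\<lambda>x::'a. (norm x)\<^sup>2) \<in> borel_measurable borel" by measurable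
  show "integrable \<pi> (\<lambda>yz. (norm (fst yz))\<^sup>2 + (norm (snd yz))\<^sup>2)"
    using integrable_Cpl_fst[OF \<pi> sq] integrable_Cpl_snd[OF \<pi> sq] P2D(3)[OF p] P2D(3)[OF q] by simp
  show "(\<lambda>yz. fst yz \<bullet> snd yz) \<in> borel_measurable \<pi>"
    by measurable
  show "AE yz in \<pi>. norm (fst yz \<bullet> snd yz) \<le> norm ((norm (fst yz))\<^sup>2 + (norm (snd yz))\<^sup>2)"
    using abs_inner_le_squares by (intro AE_I2) simp
qed

lemma pair_measure_in_Cpl:
  fixes p q :: "'a::euclidean_space measure"
  assumes p: "p \<in> P2" and q: "q \<in> P2"
  shows "p \<Otimes>\<^sub>M q \<in> Cpl p q"
proof -
  interpret P: prob_space p by (rule P2D(1)[OF p])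
  interpret Q: prob_space q by (rule P2D(1)[OF q])
  interpret PQ: pair_prob_space p q ..
  have sets [measurable_cong]: "sets p = sets borel" "sets q = sets borel"
    using P2D(2) p q by auto
  have "distr (p \<Otimes>\<^sub>M q) borel fst = distr (p \<Otimes>\<^sub>M q) p fst"
    by (rule distr_cong) (simp_all add: sets)
  also have "\<dots> = p" by (rule Q.distr_pair_fst)
  finally have fst: "distr (p \<Otimes>\<^sub>M q) borel fst = p" .
  have "distr (p \<Otimes>\<^sub>M q) borel snd = distr (distr (q \<Otimes>\<^sub>M p) (p \<Otimes>\<^sub>M q) (\<lambda>(x, y). (y, x))) borel snd"
    by (simp flip: PQ.distr_pair_swap)
  also have "\<dots> = distr (q \<Otimes>\<^sub>M p) borel fst"
    by (subst distr_distr) (auto simp: comp_def case_prod_beta)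
  also have "\<dots> = distr (q \<Otimes>\<^sub>M p) q fst"
    by (rule distr_cong) (simp_all add: sets)
  also have "\<dots> = q" by (rule P.distr_pair_fst)
  finally have snd: "distr (p \<Otimes>\<^sub>M q) borel snd = q" .
  have "sets (p \<Otimes>\<^sub>M q) = sets (borel \<Otimes>\<^sub>M borel)"
    by (rule sets_pair_measure_cong) (simp_all add: sets)
  then show ?thesis
    using fst snd PQ.prob_space_axioms by (simp add: Cpl_def)
qed

definition mixture :: "real \<Rightarrow> 'a measure \<Rightarrow> 'a measure \<Rightarrow> 'a measure" where
  "mixture u A B = measure_pmf (bernoulli_pmf u) \<bind> (\<lambda>b. if b then A else B)"

context
  fixes A B N :: "'a measure" and u :: real
  assumes prob_A: "prob_space A" and prob_B: "prob_space B"
    and sets_A [measurable_cong]: "sets A = sets N" and sets_B [measurable_cong]: "sets B = sets N"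
    and u: "0 \<le> u" "u \<le> 1"
begin

lemma measurable_mixture_kernel:
  "(\<lambda>b. if b then A else B) \<in> measurable (measure_pmf (bernoulli_pmf u)) (subprob_algebra N)"
proof -
  have "A \<in> space (subprob_algebra N)" "B \<in> space (subprob_algebra N)"
    using prob_A prob_B sets_A sets_B by (simp_all add: space_subprob_algebra prob_space_imp_subprob_space)
  then show ?thesis
    by (simp add: measurable_cong_sets[OF sets_measure_pmf_count_space refl] measurable_count_space_eq1)
qed

lemma sets_mixture [measurable_cong]: "sets (mixture u A B) = sets N"
  unfolding mixture_def using sets_A sets_B by (intro sets_bind) auto

lemma nn_integral_mixture:
  assumes "f \<in> borel_measurable N"
  shows "(\<integral>\<^sup>+x. f x \<partial>mixture u A B) = ennreal u * (\<integral>\<^sup>+x. f x \<partial>A) + ennreal (1 - u) * (\<integral>\<^sup>+x. f x \<partial>B)"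
proof -
  have "(\<integral>\<^sup>+x. f x \<partial>mixture u A B) = (\<integral>\<^sup>+b. (\<integral>\<^sup>+x. f x \<partial>(if b then A else B)) \<partial>bernoulli_pmf u)"
    unfolding mixture_def by (rule nn_integral_bind[OF assms measurable_mixture_kernel])
  also have "\<dots> = (\<Sum>b\<in>UNIV. ennreal (pmf (bernoulli_pmf u) b) * (\<integral>\<^sup>+x. f x \<partial>(if b then A else B)))"
    by (simp add: nn_integral_measure_pmf nn_integral_count_space_finite)
  also have "\<dots> = ennreal u * (\<integral>\<^sup>+x. f x \<partial>A) + ennreal (1 - u) * (\<integral>\<^sup>+x. f x \<partial>B)"
    using u by (simp add: UNIV_bool add.commute)
  finally show ?thesis .
qed

lemma prob_space_mixture: "prob_space (mixture u A B)"
proof (rule prob_spaceI)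
  have "emeasure (mixture u A B) (space (mixture u A B)) = (\<integral>\<^sup>+x. 1 \<partial>mixture u A B)"
    by simp
  also have "\<dots> = ennreal u * (\<integral>\<^sup>+x. 1 \<partial>A) + ennreal (1 - u) * (\<integral>\<^sup>+x. 1 \<partial>B)"
    by (rule nn_integral_mixture) simp
  also have "\<dots> = 1"
    using prob_space.emeasure_space_1[OF prob_A] prob_space.emeasure_space_1[OF prob_B] u
    by (simp flip: ennreal_plus)
  finally show "emeasure (mixture u A B) (space (mixture u A B)) = 1" .
qed

lemma integrable_mixture:
  fixes f :: "'a \<Rightarrow> 'b::{banach, second_countable_topology}"
  assumes A: "integrable A f" and B: "integrable B f"
  shows "integrable (mixture u A B) f"
proof -
  have [measurable]: "f \<in> borel_measurable N"
    using borel_measurable_integrable[OF A] by (simp add: measurable_cong_sets[OF sets_A refl])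
  have "(\<integral>\<^sup>+x. norm (f x) \<partial>mixture u A B) < \<infinity>"
    using A B by (simp add: nn_integral_mixture integrable_iff_bounded ennreal_mult_less_top)
  then show ?thesis by (simp add: integrable_iff_bounded)
qed

lemma integral_mixture_real:
  fixes f :: "'a \<Rightarrow> real"
  assumes A: "integrable A f" and B: "integrable B f"
  shows "(\<integral>x. f x \<partial>mixture u A B) = u * (\<integral>x. f x \<partial>A) + (1 - u) * (\<integral>x. f x \<partial>B)"
proof -
  have [measurable]: "f \<in> borel_measurable N"
    using borel_measurable_integrable[OF A] by (simp add: measurable_cong_sets[OF sets_A refl])
  have fin: "(\<integral>\<^sup>+x. ennreal (f x) \<partial>A) < \<infinity>" "(\<integral>\<^sup>+x. ennreal (- f x) \<partial>A) < \<infinity>"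
     "(\<integral>\<^sup>+x. ennreal (f x) \<partial>B) < \<infinity>" "(\<integral>\<^sup>+x. ennreal (- f x) \<partial>B) < \<infinity>"
    using A B by (auto simp: real_integrable_def top.not_eq_extremum)
  have combine: "enn2real (ennreal u * X + ennreal (1 - u) * Y) = u * enn2real X + (1 - u) * enn2real Y"
    if "X < \<infinity>" "Y < \<infinity>" for X Y
    using that u by (simp add: enn2real_plus ennreal_mult_less_top enn2real_mult)
  show ?thesis
    unfolding real_lebesgue_integral_def[OF integrable_mixture[OF A B]]
      real_lebesgue_integral_def[OF A] real_lebesgue_integral_def[OF B]
    by (simp add: nn_integral_mixture combine[OF fin(1,3)] combine[OF fin(2,4)] algebra_simps)
qed

lemma integral_mixture:
  fixes f :: "'a \<Rightarrow> 'b::euclidean_space"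
  assumes A: "integrable A f" and B: "integrable B f"
  shows "(\<integral>x. f x \<partial>mixture u A B) = u *\<^sub>R (\<integral>x. f x \<partial>A) + (1 - u) *\<^sub>R (\<integral>x. f x \<partial>B)"
proof (rule euclidean_eqI)
  fix b :: 'b assume "b \<in> Basis"
  have "(\<integral>x. f x \<partial>mixture u A B) \<bullet> b = (\<integral>x. f x \<bullet> b \<partial>mixture u A B)"
    using integrable_mixture[OF A B] by simp
  also have "\<dots> = u * (\<integral>x. f x \<bullet> b \<partial>A) + (1 - u) * (\<integral>x. f x \<bullet> b \<partial>B)"
    using A B by (intro integral_mixture_real integrable_inner_left)
  finally show "(\<integral>x. f x \<partial>mixture u A B) \<bullet> b = (u *\<^sub>R (\<integral>x. f x \<partial>A) + (1 - u) *\<^sub>R (\<integral>x. f x \<partial>B)) \<bullet> b"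
    using A B by (simp add: inner_add_left)
qed

lemma distr_mixture:
  assumes "f \<in> measurable N K"
  shows "distr (mixture u A B) K f = mixture u (distr A K f) (distr B K f)"
  unfolding mixture_def
  by (subst distr_bind[OF measurable_mixture_kernel _ assms]) (auto intro!: bind_cong)

end

lemma mixture_same: "prob_space A \<Longrightarrow> mixture u A A = A"
  unfolding mixture_def
  by (simp add: bind_const' prob_space_measure_pmf prob_space_imp_subprob_space)

lemma return_in_P2x: "return borel x \<in> P2x x"
proof -
  have "integrable (return borel x) (\<lambda>x. (norm x)\<^sup>2)"
    by (simp add: integrable_iff_bounded nn_integral_return)
  then show ?thesis
    by (simp add: P2x_def P2_def barycenter_def prob_space_return integral_return)
qed

lemma mixture_in_P2:
  assumes "p1 \<in> P2" "p2 \<in> P2" "0 \<le> u" "u \<le> 1"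
  shows "mixture u p1 p2 \<in> P2"
  using assms prob_space_mixture[of p1 p2 borel u] sets_mixture[of p1 p2 borel u]
    integrable_mixture[of p1 p2 borel u "\<lambda>x. (norm x)\<^sup>2"]
  by (simp add: P2_def)

lemma barycenter_mixture:
  assumes "p1 \<in> P2" "p2 \<in> P2" "0 \<le> u" "u \<le> 1"
  shows "barycenter (mixture u p1 p2) = u *\<^sub>R barycenter p1 + (1 - u) *\<^sub>R barycenter p2"
  unfolding barycenter_def using assms
  by (intro integral_mixture[where N = borel] integrable_P2_id) (auto dest: P2D)

lemma mixture_in_Cpl:
  assumes \<pi>1: "\<pi>1 \<in> Cpl p1 q" and \<pi>2: "\<pi>2 \<in> Cpl p2 q" and u: "0 \<le> u" "u \<le> 1"
  shows "mixture u \<pi>1 \<pi>2 \<in> Cpl (mixture u p1 p2) q"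
proof -
  note C1 = CplD[OF \<pi>1] and C2 = CplD[OF \<pi>2]
  have [measurable_cong]: "sets \<pi>1 = sets (borel \<Otimes>\<^sub>M borel)" by (rule C1(2))
  have "prob_space q"
    using prob_space.prob_space_distr[OF C1(1), of snd borel] C1(4) by simp
  have "distr (mixture u \<pi>1 \<pi>2) borel f = mixture u (distr \<pi>1 borel f) (distr \<pi>2 borel f)"
    if "f \<in> measurable (borel \<Otimes>\<^sub>M borel) borel" for f :: "'a \<times> 'a \<Rightarrow> 'a"
    using C1(1,2) C2(1,2) u that by (intro distr_mixture)
  then show ?thesis
    using C1 C2 prob_space_mixture[OF C1(1) C2(1) C1(2) C2(2) u] sets_mixture[OF C1(1) C2(1) C1(2) C2(2) u]
    by (simp add: Cpl_def mixture_same[OF \<open>prob_space q\<close>])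
qed

lemma distr_in_P2:
  fixes T :: "'a::euclidean_space \<Rightarrow> 'a"
  assumes q: "q \<in> P2" and [measurable]: "T \<in> borel_measurable borel"
    and growth: "\<And>z. (norm (T z))\<^sup>2 \<le> c + d * (norm z)\<^sup>2"
  shows "distr q borel T \<in> P2"
proof -
  have [measurable_cong]: "sets q = sets borel" by (rule P2D(2)[OF q])
  have "integrable q (\<lambda>z. (norm (T z))\<^sup>2)"
    using growth by (intro integrable_P2_quadratic[OF q]) auto
  moreover have "T \<in> borel_measurable q" by measurable
  ultimately show ?thesis
    using prob_space.prob_space_distr[OF P2D(1)[OF q], of T] by (simp add: P2_def integrable_distr_eq)
qed

lemma distr_graph_in_Cpl:
  fixes T :: "'a::euclidean_space \<Rightarrow> 'a"
  assumes q: "q \<in> P2" and [measurable]: "T \<in> borel_measurable borel"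
  shows "distr q (borel \<Otimes>\<^sub>M borel) (\<lambda>z. (T z, z)) \<in> Cpl (distr q borel T) q"
proof -
  have sets_q [measurable_cong]: "sets q = sets borel" by (rule P2D(2)[OF q])
  have "distr q borel (\<lambda>z. z) = q"
    by (rule distr_id2) (simp add: sets_q)
  moreover have "(\<lambda>z. (T z, z)) \<in> measurable q (borel \<Otimes>\<^sub>M borel)" by measurable
  ultimately show ?thesis
    using prob_space.prob_space_distr[OF P2D(1)[OF q], of "\<lambda>z. (T z, z)"] by (simp add: Cpl_def distr_distr comp_def)
qed

locale phi_psi_setting = C2_function \<psi> a k l for \<psi> :: "'a::euclidean_space \<Rightarrow> real" and a k l +
  fixes q :: "'a measure"
  assumes q: "q \<in> P2"
begin

abbreviation conj_conv :: "'a \<Rightarrow> real" where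
  "conj_conv \<equiv> conv_meas (convex_conj \<psi>) q"

definition cost :: "'a measure \<Rightarrow> real" where
  "cost p = (\<integral>y. \<psi> y \<partial>p) - MCov p q"

lemma integrable_P2: "p \<in> P2 \<Longrightarrow> integrable p \<psi>"
  by (rule integrable_P2_quadratic[OF _ borel_measurable abs_le])

lemma integrable_conj_shift: "integrable q (\<lambda>z. convex_conj \<psi> (w + z))"
proof (rule integrable_P2_quadratic[OF q])
  show "(\<lambda>z. convex_conj \<psi> (w + z)) \<in> borel_measurable borel" by measurable
  fix z
  have "\<bar>convex_conj \<psi> (w + z)\<bar> \<le> \<bar>\<psi> 0\<bar> + \<bar>l\<bar> + (norm (w + z))\<^sup>2" by (rule abs_conj_le)
  also have "\<dots> \<le> (\<bar>\<psi> 0\<bar> + \<bar>l\<bar> + 2 * (norm w)\<^sup>2) + 2 * (norm z)\<^sup>2"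
    using norm_add_squared_le[of w z] by linarith
  finally show "\<bar>convex_conj \<psi> (w + z)\<bar> \<le> (\<bar>\<psi> 0\<bar> + \<bar>l\<bar> + 2 * (norm w)\<^sup>2) + 2 * (norm z)\<^sup>2" .
qed

lemma integral_inner_le:
  assumes p: "p \<in> P2" and \<pi>: "\<pi> \<in> Cpl p q"
  shows "(\<integral>yz. fst yz \<bullet> snd yz \<partial>\<pi>) \<le> (\<integral>y. \<psi> y \<partial>p) - w \<bullet> barycenter p + conj_conv w"
proof -
  have m: "(\<lambda>z. convex_conj \<psi> (w + z)) \<in> borel_measurable borel" "(\<lambda>y. w \<bullet> y) \<in> borel_measurable borel"
    by measurable
  have int_\<psi>: "integrable \<pi> (\<lambda>yz. \<psi> (fst yz))"
    using integrable_Cpl_fst[OF \<pi> borel_measurable] integrable_P2[OF p] by simp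
  have int_conj: "integrable \<pi> (\<lambda>yz. convex_conj \<psi> (w + snd yz))"
    using integrable_Cpl_snd[OF \<pi> m(1)] integrable_conj_shift by simp
  have int_w: "integrable \<pi> (\<lambda>yz. w \<bullet> fst yz)"
    using integrable_Cpl_fst[OF \<pi> m(2)] integrable_inner_right[OF integrable_P2_id[OF p]] by simp
  have "(\<integral>yz. fst yz \<bullet> snd yz \<partial>\<pi>) \<le> (\<integral>yz. \<psi> (fst yz) + convex_conj \<psi> (w + snd yz) - w \<bullet> fst yz \<partial>\<pi>)"
  proof (rule integral_mono)
    show "integrable \<pi> (\<lambda>yz. fst yz \<bullet> snd yz)" by (rule integrable_Cpl_inner[OF \<pi> p q])
    show "integrable \<pi> (\<lambda>yz. \<psi> (fst yz) + convex_conj \<psi> (w + snd yz) - w \<bullet> fst yz)"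
      using int_\<psi> int_conj int_w by simp
    fix yz :: "'a \<times> 'a"
    show "fst yz \<bullet> snd yz \<le> \<psi> (fst yz) + convex_conj \<psi> (w + snd yz) - w \<bullet> fst yz"
      using fenchel_young[of "w + snd yz" "fst yz"] by (simp add: inner_add_left inner_commute[of "snd yz"])
  qed
  also have "\<dots> = (\<integral>y. \<psi> y \<partial>p) + conj_conv w - (\<integral>y. w \<bullet> y \<partial>p)"
    using int_\<psi> int_conj int_w
    by (simp add: integral_Cpl_fst[OF \<pi>] integral_Cpl_snd[OF \<pi>] m conv_meas_def)
  also have "(\<integral>y. w \<bullet> y \<partial>p) = w \<bullet> barycenter p"
    unfolding barycenter_def using integrable_P2_id[OF p] by simp
  finally show ?thesis by simp
qed

lemma MCov_le:
  assumes "p \<in> P2"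
  shows "MCov p q \<le> (\<integral>y. \<psi> y \<partial>p) - w \<bullet> barycenter p + conj_conv w"
  unfolding MCov_def using pair_measure_in_Cpl[OF assms q] integral_inner_le[OF assms]
  by (intro cSup_least) auto

lemma integral_inner_le_MCov:
  assumes "p \<in> P2" and "\<pi> \<in> Cpl p q"
  shows "(\<integral>yz. fst yz \<bullet> snd yz \<partial>\<pi>) \<le> MCov p q"
  unfolding MCov_def using assms integral_inner_le[OF assms(1), of _ 0]
  by (intro cSup_upper bdd_aboveI2) auto

lemma cost_ge: "p \<in> P2 \<Longrightarrow> w \<bullet> barycenter p - conj_conv w \<le> cost p"
  using MCov_le[of p w] by (simp add: cost_def)

lemma phi_psi_le_cost:
  assumes "p \<in> P2x x"
  shows "phi_psi q \<psi> x \<le> cost p"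
  unfolding phi_psi_def cost_def[symmetric] using assms cost_ge[of _ 0]
  by (intro cInf_lower bdd_belowI2[where m = "- conj_conv 0"]) (auto simp: P2x_def)

lemma conj_conj_conv_le_phi_psi: "convex_conj conj_conv x \<le> phi_psi q \<psi> x"
  unfolding phi_psi_def cost_def[symmetric]
proof (rule cInf_greatest)
  show "cost ` P2x x \<noteq> {}" using return_in_P2x by blast
  show "convex_conj conj_conv x \<le> c" if "c \<in> cost ` P2x x" for c
    using that cost_ge by (auto intro!: convex_conj_le simp: P2x_def inner_commute)
qed

lemma bdd_above_conj_conv: "bdd_above (range (\<lambda>w. x \<bullet> w - conj_conv w))"
proof (rule bdd_aboveI2)
  fix w
  show "x \<bullet> w - conj_conv w \<le> cost (return borel x)"
    using cost_ge[of "return borel x" w] return_in_P2x[of x] by (simp add: P2x_def inner_commute)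
qed

lemma exists_near_optimal_coupling:
  assumes "e > 0"
  obtains p \<pi> where "p \<in> P2x x" "\<pi> \<in> Cpl p q"
    "(\<integral>y. \<psi> y \<partial>p) - (\<integral>yz. fst yz \<bullet> snd yz \<partial>\<pi>) < phi_psi q \<psi> x + e"
proof -
  have "\<exists>c \<in> cost ` P2x x. c < phi_psi q \<psi> x + e / 2"
    unfolding phi_psi_def cost_def[symmetric] using return_in_P2x assms by (intro cInf_lessD) auto
  then obtain p where p: "p \<in> P2x x" "cost p < phi_psi q \<psi> x + e / 2" by blast
  then have "p \<in> P2" by (simp add: P2x_def)
  have "\<exists>c \<in> (\<lambda>\<pi>. \<integral>yz. fst yz \<bullet> snd yz \<partial>\<pi>) ` Cpl p q. MCov p q - e / 2 < c"
    unfolding MCov_def using pair_measure_in_Cpl[OF \<open>p \<in> P2\<close> q] assms by (intro less_cSupD) auto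
  then obtain \<pi> where "\<pi> \<in> Cpl p q" "MCov p q - e / 2 < (\<integral>yz. fst yz \<bullet> snd yz \<partial>\<pi>)" by blast
  with p show thesis by (intro that) (auto simp: cost_def)
qed

lemma convex_on_phi_psi: "convex_on UNIV (phi_psi q \<psi>)"
proof (rule convex_onI)
  fix t :: real and x1 x2 :: 'a assume t: "0 < t" "t < 1"
  define u where "u = 1 - t"
  have u: "0 \<le> u" "u \<le> 1" using t by (auto simp: u_def)
  show "phi_psi q \<psi> ((1 - t) *\<^sub>R x1 + t *\<^sub>R x2) \<le> (1 - t) * phi_psi q \<psi> x1 + t * phi_psi q \<psi> x2"
  proof (rule field_le_epsilon)
    fix e :: real assume "0 < e"
    obtain p1 \<pi>1 where p1: "p1 \<in> P2x x1" "\<pi>1 \<in> Cpl p1 q"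
      and near1: "(\<integral>y. \<psi> y \<partial>p1) - (\<integral>yz. fst yz \<bullet> snd yz \<partial>\<pi>1) < phi_psi q \<psi> x1 + e"
      using exists_near_optimal_coupling[OF \<open>0 < e\<close>] by metis
    obtain p2 \<pi>2 where p2: "p2 \<in> P2x x2" "\<pi>2 \<in> Cpl p2 q"
      and near2: "(\<integral>y. \<psi> y \<partial>p2) - (\<integral>yz. fst yz \<bullet> snd yz \<partial>\<pi>2) < phi_psi q \<psi> x2 + e"
      using exists_near_optimal_coupling[OF \<open>0 < e\<close>] by metis
    have P2: "p1 \<in> P2" "p2 \<in> P2" using p1 p2 by (simp_all add: P2x_def)
    note prob_sets = P2D(1)[OF P2(1)] P2D(1)[OF P2(2)] P2D(2)[OF P2(1)] P2D(2)[OF P2(2)]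
    note Cpl_prob_sets = CplD(1)[OF p1(2)] CplD(1)[OF p2(2)] CplD(2)[OF p1(2)] CplD(2)[OF p2(2)]
    let ?p = "mixture u p1 p2" and ?\<pi> = "mixture u \<pi>1 \<pi>2"
    have "?p \<in> P2x ((1 - t) *\<^sub>R x1 + t *\<^sub>R x2)"
      using mixture_in_P2[OF P2 u] barycenter_mixture[OF P2 u] p1 p2 by (simp add: P2x_def u_def)
    then have "phi_psi q \<psi> ((1 - t) *\<^sub>R x1 + t *\<^sub>R x2) \<le> (\<integral>y. \<psi> y \<partial>?p) - MCov ?p q"
      by (simp add: phi_psi_le_cost flip: cost_def)
    also have "\<dots> \<le> (\<integral>y. \<psi> y \<partial>?p) - (\<integral>yz. fst yz \<bullet> snd yz \<partial>?\<pi>)"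
      using integral_inner_le_MCov[OF mixture_in_P2[OF P2 u] mixture_in_Cpl[OF p1(2) p2(2) u]] by simp
    also have "\<dots> = u * ((\<integral>y. \<psi> y \<partial>p1) - (\<integral>yz. fst yz \<bullet> snd yz \<partial>\<pi>1))
        + (1 - u) * ((\<integral>y. \<psi> y \<partial>p2) - (\<integral>yz. fst yz \<bullet> snd yz \<partial>\<pi>2))"
      using integral_mixture_real[OF prob_sets u integrable_P2[OF P2(1)] integrable_P2[OF P2(2)]]
        integral_mixture_real[OF Cpl_prob_sets u
          integrable_Cpl_inner[OF p1(2) P2(1) q] integrable_Cpl_inner[OF p2(2) P2(2) q]]
      by (simp add: algebra_simps)
    also have "\<dots> \<le> u * (phi_psi q \<psi> x1 + e) + (1 - u) * (phi_psi q \<psi> x2 + e)"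
      using near1 near2 u by (intro add_mono mult_left_mono) auto
    finally show "phi_psi q \<psi> ((1 - t) *\<^sub>R x1 + t *\<^sub>R x2) \<le> (1 - t) * phi_psi q \<psi> x1 + t * phi_psi q \<psi> x2 + e"
      by (simp add: u_def algebra_simps)
  qed
qed simp

lemma exists_P2_conj_conv_le:
  assumes "e > 0"
  obtains p where "p \<in> P2" "conj_conv g - e \<le> g \<bullet> barycenter p - cost p"
proof -
  obtain T where [measurable]: "T \<in> borel_measurable borel"
    and T: "\<And>w. convex_conj \<psi> w - e < w \<bullet> T w - \<psi> (T w)"
    using obtain_measurable_approx_maximizer[OF assms] by blast
  define S where "S z = T (g + z)" for z
  have S_measurable [measurable]: "S \<in> borel_measurable borel" unfolding S_def by measurable
  have S: "convex_conj \<psi> (g + z) - e < g \<bullet> S z - \<psi> (S z) + S z \<bullet> z" for z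
    using T[of "g + z"] by (simp add: S_def inner_add_left inner_commute[of z])
  have S_growth: "(norm (S z))\<^sup>2 \<le> (8 * (norm g)\<^sup>2 + 4 * (\<psi> 0 + e - l)) + 8 * (norm z)\<^sup>2" for z
    using approx_maximizer_norm_le[OF T[of "g + z"]] norm_add_squared_le[of g z] by (simp add: S_def)
  define p where "p = distr q borel S"
  define \<pi> where "\<pi> = distr q (borel \<Otimes>\<^sub>M borel) (\<lambda>z. (S z, z))"
  have p: "p \<in> P2" unfolding p_def by (rule distr_in_P2[OF q S_measurable S_growth])
  have \<pi>: "\<pi> \<in> Cpl p q" unfolding p_def \<pi>_def by (rule distr_graph_in_Cpl[OF q S_measurable])
  have [measurable_cong]: "sets q = sets borel" by (rule P2D(2)[OF q])
  have int_\<psi>: "integrable q (\<lambda>z. \<psi> (S z))"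
    using integrable_P2[OF p] by (simp add: p_def integrable_distr_eq)
  have int_S: "integrable q S"
    using integrable_P2_id[OF p] by (simp add: p_def integrable_distr_eq)
  have int_inner: "integrable q (\<lambda>z. S z \<bullet> z)"
    using integrable_Cpl_inner[OF \<pi> p q] by (simp add: \<pi>_def integrable_distr_eq)
  interpret Q: prob_space q by (rule P2D(1)[OF q])
  have "conj_conv g - e = (\<integral>z. convex_conj \<psi> (g + z) - e \<partial>q)"
    using integrable_conj_shift[of g] by (simp add: conv_meas_def Q.prob_space)
  also have "\<dots> \<le> (\<integral>z. g \<bullet> S z - \<psi> (S z) + S z \<bullet> z \<partial>q)"
    using integrable_conj_shift int_\<psi> int_S int_inner S by (intro integral_mono) (auto intro!: less_imp_le)
  also have "\<dots> = g \<bullet> (\<integral>z. S z \<partial>q) - (\<integral>z. \<psi> (S z) \<partial>q) + (\<integral>z. S z \<bullet> z \<partial>q)"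
    using int_\<psi> int_S int_inner by simp
  also have "\<dots> = g \<bullet> barycenter p - ((\<integral>y. \<psi> y \<partial>p) - (\<integral>yz. fst yz \<bullet> snd yz \<partial>\<pi>))"
    by (simp add: p_def \<pi>_def barycenter_def integral_distr)
  also have "\<dots> \<le> g \<bullet> barycenter p - cost p"
    using integral_inner_le_MCov[OF p \<pi>] by (simp add: cost_def)
  finally show thesis using p that by blast
qed

lemma phi_psi_le_conj_conj_conv: "phi_psi q \<psi> x \<le> convex_conj conj_conv x"
proof -
  obtain g where subgradient: "\<And>y. phi_psi q \<psi> x + g \<bullet> (y - x) \<le> phi_psi q \<psi> y"
    using convex_on_subgradient[OF convex_on_phi_psi] by blast
  have "phi_psi q \<psi> x \<le> g \<bullet> x - conj_conv g"
  proof (rule field_le_epsilon)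
    fix e :: real assume "0 < e"
    then obtain p where p: "p \<in> P2" "conj_conv g - e \<le> g \<bullet> barycenter p - cost p"
      by (rule exists_P2_conj_conv_le)
    then have "phi_psi q \<psi> (barycenter p) \<le> cost p"
      by (intro phi_psi_le_cost) (simp add: P2x_def)
    then show "phi_psi q \<psi> x \<le> g \<bullet> x - conj_conv g + e"
      using subgradient[of "barycenter p"] p(2) by (simp add: inner_diff_right)
  qed
  also have "\<dots> \<le> convex_conj conj_conv x"
    using convex_conj_ge[OF bdd_above_conj_conv[of x], of g] by (simp add: inner_commute)
  finally show ?thesis .
qed

lemma phi_psi_eq: "phi_psi q \<psi> = convex_conj (conv_meas (convex_conj \<psi>) q)"
  using phi_psi_le_conj_conj_conv conj_conj_conv_le_phi_psi by (intro ext antisym)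

end

lemma phi_psi_eq_convex_conj:
  assumes "\<psi> \<in> C2" and "q \<in> P2"
  shows "phi_psi q \<psi> = convex_conj (conv_meas (convex_conj \<psi>) q)"
proof -
  obtain a k l where "C2_function \<psi> a k l" using assms(1) by (auto simp: C2_iff_C2_function)
  then interpret phi_psi_setting \<psi> a k l q using assms(2) by (simp add: phi_psi_setting_def phi_psi_setting_axioms_def)
  show ?thesis by (rule phi_psi_eq)
qed

lemma obtain_convex_C2_same_conj:
  assumes "\<psi> \<in> C2" and "\<nu> \<in> P2"
  obtains \<psi>' where "\<psi>' \<in> C2" "convex_on UNIV \<psi>'" "convex_conj \<psi>' = convex_conj \<psi>"
    "(\<integral>y. \<psi>' y \<partial>\<nu>) \<le> (\<integral>y. \<psi> y \<partial>\<nu>)"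
proof -
  obtain a k l where "C2_function \<psi> a k l" using assms(1) by (auto simp: C2_iff_C2_function)
  then interpret C2_function \<psi> a k l .
  interpret biconj: C2_function "convex_conj (convex_conj \<psi>)" a k l by (rule C2_function_biconj)
  have "(\<integral>y. convex_conj (convex_conj \<psi>) y \<partial>\<nu>) \<le> (\<integral>y. \<psi> y \<partial>\<nu>)"
    using assms(2) biconj_le
    by (intro integral_mono integrable_P2_quadratic[OF _ _ abs_le] integrable_P2_quadratic[OF _ _ biconj.abs_le])
      auto
  then show thesis
    using C2_function_biconj convex_on_biconj conj_biconj by (intro that) (auto simp: C2_iff_C2_function)
qed

theorem proposition2p7:
  fixes \<mu> \<nu> q :: "'a::euclidean_space measure"
  assumes "\<mu> \<in> P2" and "\<nu> \<in> P2" and "q \<in> P2"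
    and "convex_order \<mu> \<nu>"
    and "no_mass_small_sets q"
  shows "D_tilde q \<mu> \<nu> =
    (INF \<psi> \<in> {\<psi> \<in> C2. convex_on UNIV \<psi>}.
       ereal ((\<integral>y. \<psi> y \<partial>\<nu>) - (\<integral>x. convex_conj (conv_meas (convex_conj \<psi>) q) x \<partial>\<mu>)))"
proof -
  define \<Phi> where "\<Phi> \<psi> = ereal ((\<integral>y. \<psi> y \<partial>\<nu>) - (\<integral>x. convex_conj (conv_meas (convex_conj \<psi>) q) x \<partial>\<mu>))"
    for \<psi> :: "'a \<Rightarrow> real"
  have "D_tilde q \<mu> \<nu> = (INF \<psi> \<in> C2. \<Phi> \<psi>)"
    unfolding D_tilde_def \<Phi>_def
    using phi_psi_eq_convex_conj[OF _ \<open>q \<in> P2\<close>] by (intro INF_cong) auto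
  also have "\<dots> = (INF \<psi> \<in> {\<psi> \<in> C2. convex_on UNIV \<psi>}. \<Phi> \<psi>)"
  proof (rule antisym)
    show "(INF \<psi> \<in> C2. \<Phi> \<psi>) \<le> (INF \<psi> \<in> {\<psi> \<in> C2. convex_on UNIV \<psi>}. \<Phi> \<psi>)"
      by (rule INF_superset_mono) auto
    show "(INF \<psi> \<in> {\<psi> \<in> C2. convex_on UNIV \<psi>}. \<Phi> \<psi>) \<le> (INF \<psi> \<in> C2. \<Phi> \<psi>)"
    proof (rule INF_mono)
      fix \<psi> :: "'a \<Rightarrow> real" assume "\<psi> \<in> C2"
      then obtain \<psi>' where "\<psi>' \<in> C2" "convex_on UNIV \<psi>'" "convex_conj \<psi>' = convex_conj \<psi>"
        "(\<integral>y. \<psi>' y \<partial>\<nu>) \<le> (\<integral>y. \<psi> y \<partial>\<nu>)"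
        using obtain_convex_C2_same_conj[OF _ \<open>\<nu> \<in> P2\<close>] by blast
      then show "\<exists>\<psi>' \<in> {\<psi> \<in> C2. convex_on UNIV \<psi>}. \<Phi> \<psi>' \<le> \<Phi> \<psi>"
        by (auto simp: \<Phi>_def)
    qed
  qed
  finally show ?thesis unfolding \<Phi>_def .
qed

end
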